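(* In a strategic game in the setting described in the context, let Assumption SAV be satisfied. Then for all $s,t\in\mathcal{S}$ with $s\neq t$ we have $s_i\neq t_i$ for every $i=1,2,\dots,n$.
   Context: Setting: there are $n\ge 2$ players and a measurable space $(\Omega,\mathcal{F})$. Each player $i$ has a prior $p_i$, an action set $A_i\subseteq\mathbb{R}$ with $|A_i|>1$, and a finite private information partition $\mathcal{I}_i$ of $\Omega$. The priors are equivalent (same null sets), and strategies agreeing up to null events are identified. A strategy of player $i$ is a $\sigma(\mathcal{I}_i)$-measurable function $s_i:\Omega\to A_i$, and player $i$ may apply any such function. For each strategy $s_i$, player $i$ has a unique conjecture $\Psi_i(s_i)$ about the $(n-1)$-tuple of strategies of the other players. The set of Savage acts available to player $i$ is the graph $\mathcal{S}_i=\{(s_i,\Psi_i(s_i)) : s_i \text{ a strategy of player } i\}$, viewed as a set of strategy tuples $s=(s_1,\dots,s_n)$. Under SAV these graphs coincide, $\mathcal{S}_1=\cdots=\mathcal{S}_n$, and $\mathcal{S}$ denotes this common set. Assumption SAV (strategic certainty): for every player $i$ and every strategy $s_i$, $\Psi_i(s_i)$ equals the true tuple of strategies the other players apply in response to $s_i$. *)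

theory Defs
  imports "HOL-Probability.Probability"
begin

(* Players are 0,...,n-1.  A strategy is a real-valued function on the state space;
   a strategy tuple (profile) is a function nat => ('w => real), only components < n matter.
   Null sets: all priors are equivalent, so we use the prior p 0 of player 0 as reference. *)

definition is_info_partition :: "'w set \<Rightarrow> 'w set set \<Rightarrow> bool" where
  "is_info_partition \<Omega> P \<longleftrightarrow>
     finite P \<and> \<Union>P = \<Omega> \<and> (\<forall>B\<in>P. B \<noteq> {}) \<and> disjoint P"

definition strategy :: "'w measure \<Rightarrow> 'w set set \<Rightarrow> real set \<Rightarrow> ('w \<Rightarrow> real) \<Rightarrow> bool" where
  "strategy M P A f \<longleftrightarrow>
     f \<in> borel_measurable (sigma (space M) P) \<and> (\<forall>\<omega>\<in>space M. f \<omega> \<in> A)"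

definition ident :: "'w measure \<Rightarrow> ('w \<Rightarrow> real) \<Rightarrow> ('w \<Rightarrow> real) \<Rightarrow> bool" where
  "ident M f g \<longleftrightarrow> (AE \<omega> in M. f \<omega> = g \<omega>)"

definition prof_ident :: "'w measure \<Rightarrow> nat \<Rightarrow> (nat \<Rightarrow> 'w \<Rightarrow> real) \<Rightarrow> (nat \<Rightarrow> 'w \<Rightarrow> real) \<Rightarrow> bool" where
  "prof_ident M n s t \<longleftrightarrow> (\<forall>i<n. ident M (s i) (t i))"

(* The setting: n >= 2 players, equivalent priors p i on a common measurable space,
   action sets A i (subsets of R) with more than one element, finite information
   partitions I i, and conjectures Psi i: Psi i x j is player i's conjecture (given own
   strategy x) about the strategy of player j /= i; conjectures are strategies and are
   well defined on identified strategies (unique conjecture per strategy). *)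
definition game_setting ::
  "nat \<Rightarrow> (nat \<Rightarrow> 'w measure) \<Rightarrow> (nat \<Rightarrow> real set) \<Rightarrow> (nat \<Rightarrow> 'w set set)
   \<Rightarrow> (nat \<Rightarrow> ('w \<Rightarrow> real) \<Rightarrow> nat \<Rightarrow> 'w \<Rightarrow> real) \<Rightarrow> bool" where
  "game_setting n p A I \<Psi> \<longleftrightarrow>
     n \<ge> 2 \<and>
     (\<forall>i<n. prob_space (p i) \<and> sets (p i) = sets (p 0)) \<and>
     (\<forall>i<n. \<forall>j<n. null_sets (p i) = null_sets (p j)) \<and>
     (\<forall>i<n. \<exists>a b. a \<in> A i \<and> b \<in> A i \<and> a \<noteq> b) \<and>
     (\<forall>i<n. is_info_partition (space (p 0)) (I i)) \<and>
     (\<forall>i<n. \<forall>x. strategy (p 0) (I i) (A i) x \<longrightarrow>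
        (\<forall>j<n. j \<noteq> i \<longrightarrow> strategy (p 0) (I j) (A j) (\<Psi> i x j))) \<and>
     (\<forall>i<n. \<forall>x y. strategy (p 0) (I i) (A i) x \<longrightarrow> strategy (p 0) (I i) (A i) y \<longrightarrow>
        ident (p 0) x y \<longrightarrow> (\<forall>j<n. j \<noteq> i \<longrightarrow> ident (p 0) (\<Psi> i x j) (\<Psi> i y j)))"

(* Savage acts of player i: the graph {(x, Psi i x)} (as set of strategy tuples, closed
   under identification up to null events) *)
definition savage_acts ::
  "nat \<Rightarrow> (nat \<Rightarrow> 'w measure) \<Rightarrow> (nat \<Rightarrow> real set) \<Rightarrow> (nat \<Rightarrow> 'w set set)
   \<Rightarrow> (nat \<Rightarrow> ('w \<Rightarrow> real) \<Rightarrow> nat \<Rightarrow> 'w \<Rightarrow> real) \<Rightarrow> nat \<Rightarrow> (nat \<Rightarrow> 'w \<Rightarrow> real) set" where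
  "savage_acts n p A I \<Psi> i =
     {s. \<exists>x. strategy (p 0) (I i) (A i) x \<and> ident (p 0) (s i) x \<and>
           (\<forall>j<n. j \<noteq> i \<longrightarrow> ident (p 0) (s j) (\<Psi> i x j))}"

(* Assumption SAV: R i x j is the strategy player j truly applies in response to player i
   applying x; every conjecture equals the true response. *)
definition SAV ::
  "nat \<Rightarrow> (nat \<Rightarrow> 'w measure) \<Rightarrow> (nat \<Rightarrow> real set) \<Rightarrow> (nat \<Rightarrow> 'w set set)
   \<Rightarrow> (nat \<Rightarrow> ('w \<Rightarrow> real) \<Rightarrow> nat \<Rightarrow> 'w \<Rightarrow> real)
   \<Rightarrow> (nat \<Rightarrow> ('w \<Rightarrow> real) \<Rightarrow> nat \<Rightarrow> 'w \<Rightarrow> real) \<Rightarrow> bool" where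
  "SAV n p A I \<Psi> R \<longleftrightarrow>
     (\<forall>i<n. \<forall>x. strategy (p 0) (I i) (A i) x \<longrightarrow>
        (\<forall>j<n. j \<noteq> i \<longrightarrow> ident (p 0) (\<Psi> i x j) (R i x j)))"

end

theory Submission
  imports Defs
begin

text \<open>Under SAV all players share the set of Savage acts, so every element of it lies on the
  graph of each player's conjecture map. Agreement of two such profiles in one component therefore
  forces agreement of the conjectures, i.e. of all other components, by well-definedness of the
  conjectures on identified strategies. SAV enters only through this coincidence of the graphs.\<close>

lemma ident_sym: "ident M f g \<Longrightarrow> ident M g f"
  unfolding ident_def by (erule AE_mp) auto

lemma ident_trans: "ident M f g \<Longrightarrow> ident M g h \<Longrightarrow> ident M f h"
  unfolding ident_def by (erule AE_mp, erule AE_mp) auto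

lemma savage_acts_determined_by_own_component:
  assumes game: "game_setting n p A I \<Psi>" and i: "i < n"
    and s: "s \<in> savage_acts n p A I \<Psi> i" and t: "t \<in> savage_acts n p A I \<Psi> i"
    and st: "ident (p 0) (s i) (t i)"
  shows "prof_ident (p 0) n s t"
  unfolding prof_ident_def
proof (intro allI impI)
  obtain x where x: "strategy (p 0) (I i) (A i) x" "ident (p 0) (s i) x"
      "\<forall>j<n. j \<noteq> i \<longrightarrow> ident (p 0) (s j) (\<Psi> i x j)"
    using s unfolding savage_acts_def by auto
  obtain y where y: "strategy (p 0) (I i) (A i) y" "ident (p 0) (t i) y"
      "\<forall>j<n. j \<noteq> i \<longrightarrow> ident (p 0) (t j) (\<Psi> i y j)"
    using t unfolding savage_acts_def by auto
  have "ident (p 0) x y"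
    using ident_trans[OF ident_sym[OF x(2)] ident_trans[OF st y(2)]] .
  moreover have "\<forall>i<n. \<forall>x y. strategy (p 0) (I i) (A i) x \<longrightarrow> strategy (p 0) (I i) (A i) y \<longrightarrow>
      ident (p 0) x y \<longrightarrow> (\<forall>j<n. j \<noteq> i \<longrightarrow> ident (p 0) (\<Psi> i x j) (\<Psi> i y j))"
    using game unfolding game_setting_def by (elim conjE)
  ultimately have conj: "ident (p 0) (\<Psi> i x j) (\<Psi> i y j)" if "j < n" "j \<noteq> i" for j
    using i x(1) y(1) that by simp
  fix j assume j: "j < n"
  show "ident (p 0) (s j) (t j)"
  proof (cases "j = i")
    case True
    then show ?thesis using st by simp
  next
    case False
    have sx: "ident (p 0) (s j) (\<Psi> i x j)" and ty: "ident (p 0) (t j) (\<Psi> i y j)"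
      using j False x(3) y(3) by simp_all
    show ?thesis
      using ident_trans[OF sx ident_trans[OF conj[OF j False] ident_sym[OF ty]]] .
  qed
qed

theorem theorem4:
  fixes n :: nat and p :: "nat \<Rightarrow> 'w measure" and A :: "nat \<Rightarrow> real set"
    and I :: "nat \<Rightarrow> 'w set set" and \<Psi> R :: "nat \<Rightarrow> ('w \<Rightarrow> real) \<Rightarrow> nat \<Rightarrow> 'w \<Rightarrow> real"
    and S :: "(nat \<Rightarrow> 'w \<Rightarrow> real) set"
  assumes game: "game_setting n p A I \<Psi>"
    and sav: "SAV n p A I \<Psi> R"
    and coincide: "\<forall>i<n. \<forall>j<n. savage_acts n p A I \<Psi> i = savage_acts n p A I \<Psi> j"
    and S_def: "S = savage_acts n p A I \<Psi> 0"
    and s: "s \<in> S" and t: "t \<in> S"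
    and neq: "\<not> prof_ident (p 0) n s t"
  shows "\<forall>i<n. \<not> ident (p 0) (s i) (t i)"
proof (intro allI impI notI)
  fix i assume i: "i < n" and st: "ident (p 0) (s i) (t i)"
  have "S = savage_acts n p A I \<Psi> i"
    using S_def coincide[rule_format, of 0 i] i by simp
  then have "prof_ident (p 0) n s t"
    using savage_acts_determined_by_own_component[OF game i] s t st by simp
  with neq show False ..
qed

end
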